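(* In the model described in the context, suppose $\triangle C=0$. Let $\underline\alpha_x=(M+N+1)k$ and $\bar\alpha_x=\frac{(M+1)\sqrt{N+1}}{2(\sqrt{N+1}-1)}Nk$. Then for all $\alpha_x\in[\underline\alpha_x,\bar\alpha_x]$ there exist $(f,x)\in Q$ and $x_S\in X(0)$ such that \[Mx+Ny_j(f\mathbf1,x\mathbf1)<Mx_S+Ny_j(\mathbf0,x_S\mathbf1),\qquad \mathsf{SW}(y_j(f\mathbf1,x\mathbf1),x)<\mathsf{SW}(y_j(\mathbf0,x_S\mathbf1),x_S).\] Moreover, \[\frac{Mx_S+Ny_j(\mathbf0,x_S\mathbf1)}{Mx+Ny_j(f\mathbf1,x\mathbf1)}\le\frac{(MN+M+N)(M+1)}{M(M+1)(N+1)+2(N+1-\sqrt{N+1})},\] \[\frac{\mathsf{SW}(y_j(\mathbf0,x_S\mathbf1),x_S)}{\mathsf{SW}(y_j(f\mathbf1,x\mathbf1),x)}\le\frac{(M+1)^2(MN+M+N)(MN+M+N+2)}{(N+1)\big((M^2+M+2)\sqrt{N+1}-2\big)\big((M^2+3M)\sqrt{N+1}+2\big)},\] where the inequalities are tight.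
   Context: Model: $M\ge1$ leaders and $N\ge2$ followers; inverse demand $P(q)=\alpha-\beta q$, $\alpha,\beta>0$; leader marginal cost $C$, follower marginal cost $c$, $c\ge C>0$; follower capacity $k>0$. Leader $i$ produces $x_i\ge0$; follower $j$ takes forward position $f_j\in\mathbb{R}$ and spot production $y_j\in[0,k]$. Given $\mathbf f,\mathbf x$, the spot market is the game among followers where follower $j$ chooses $y_j\in[0,k]$ to maximize $P(\sum_ix_i+\sum_{j'}y_{j'})(y_j-f_j)-cy_j$; its unique Nash equilibrium is $\mathbf y(\mathbf f,\mathbf x)=(y_1(\mathbf f,\mathbf x),\dots,y_N(\mathbf f,\mathbf x))$. Follower $j$'s forward payoff is $(P(\sum_ix_i+\sum_{j'}y_{j'}(\mathbf f,\mathbf x))-c)y_j(\mathbf f,\mathbf x)$, maximized over $f_j\in\mathbb{R}$; leader $i$'s payoff is $\psi_i=(P(\sum_ix_i+\sum_{j'}y_{j'}(\mathbf f,\mathbf x))-C)x_i$, maximized over $x_i\in\mathbb{R}_+$. A Nash equilibrium of the forward market is $(\mathbf f,\mathbf x)$ where no leader or follower can strictly gain by a unilateral deviation; $Q=\{(f,x)\in\mathbb{R}\times\mathbb{R}_+:(f\mathbf1,x\mathbf1)\text{ is a Nash equilibrium}\}$. The symmetric Stackelberg equilibria are $X(0)=\{x\in\mathbb{R}_+:\psi_i(x;x\mathbf1,\mathbf0)\ge\psi_i(\bar x;x\mathbf1,\mathbf0)\ \forall\bar x\in\mathbb{R}_+,\ \forall i\}$, where $\psi_i(\bar x;x\mathbf1,\mathbf0)$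 is leader $i$'s payoff when it produces $\bar x$, the other leaders produce $x$, and all followers' forward positions are $0$. Social welfare of symmetric productions (followers $y$, leaders $x$): $\mathsf{SW}(y,x)=\int_0^{Mx+Ny}P(w)\,dw-(MCx+Ncy)$. $\alpha_x=(\alpha-C)/\beta$, $\triangle C=(c-C)/\beta$. *)

theory Defs
  imports "HOL-Analysis.Analysis"
begin

text \<open>Model parameters are passed explicitly in the order
  al (alpha), be (beta), C (leader cost), c (follower cost), k (capacity),
  M (number of leaders), N (number of followers).
  Leaders are indexed by i < M, followers by j < N; profiles are functions on nat
  (only the entries below M resp. N matter).\<close>

definition invP :: "real \<Rightarrow> real \<Rightarrow> real \<Rightarrow> real" where
  "invP al be q = al - be * q"

definition total :: "nat \<Rightarrow> nat \<Rightarrow> (nat \<Rightarrow> real) \<Rightarrow> (nat \<Rightarrow> real) \<Rightarrow> real" where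
  "total M N x y = (\<Sum>i<M. x i) + (\<Sum>j<N. y j)"

definition spot_payoff ::
  "real \<Rightarrow> real \<Rightarrow> real \<Rightarrow> nat \<Rightarrow> nat \<Rightarrow> (nat \<Rightarrow> real) \<Rightarrow> (nat \<Rightarrow> real) \<Rightarrow> (nat \<Rightarrow> real) \<Rightarrow> nat \<Rightarrow> real" where
  "spot_payoff al be c M N f x y j = invP al be (total M N x y) * (y j - f j) - c * y j"

definition spot_NE ::
  "real \<Rightarrow> real \<Rightarrow> real \<Rightarrow> real \<Rightarrow> nat \<Rightarrow> nat \<Rightarrow> (nat \<Rightarrow> real) \<Rightarrow> (nat \<Rightarrow> real) \<Rightarrow> (nat \<Rightarrow> real) \<Rightarrow> bool" where
  "spot_NE al be c k M N f x y \<longleftrightarrow>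
     (\<forall>j. N \<le> j \<longrightarrow> y j = 0) \<and>
     (\<forall>j<N. 0 \<le> y j \<and> y j \<le> k \<and>
        (\<forall>z. 0 \<le> z \<and> z \<le> k \<longrightarrow>
           spot_payoff al be c M N f x (y(j := z)) j \<le> spot_payoff al be c M N f x y j))"

text \<open>The (unique) spot equilibrium y(f,x).\<close>
definition spot_y ::
  "real \<Rightarrow> real \<Rightarrow> real \<Rightarrow> real \<Rightarrow> nat \<Rightarrow> nat \<Rightarrow> (nat \<Rightarrow> real) \<Rightarrow> (nat \<Rightarrow> real) \<Rightarrow> nat \<Rightarrow> real" where
  "spot_y al be c k M N f x = (THE y. spot_NE al be c k M N f x y)"

definition fwd_payoff ::
  "real \<Rightarrow> real \<Rightarrow> real \<Rightarrow> real \<Rightarrow> nat \<Rightarrow> nat \<Rightarrow> (nat \<Rightarrow> real) \<Rightarrow> (nat \<Rightarrow> real) \<Rightarrow> nat \<Rightarrow> real" where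
  "fwd_payoff al be c k M N f x j =
     (let y = spot_y al be c k M N f x in (invP al be (total M N x y) - c) * y j)"

definition leader_payoff ::
  "real \<Rightarrow> real \<Rightarrow> real \<Rightarrow> real \<Rightarrow> real \<Rightarrow> nat \<Rightarrow> nat \<Rightarrow> (nat \<Rightarrow> real) \<Rightarrow> (nat \<Rightarrow> real) \<Rightarrow> nat \<Rightarrow> real" where
  "leader_payoff al be C c k M N f x i =
     (let y = spot_y al be c k M N f x in (invP al be (total M N x y) - C) * x i)"

definition fwd_NE ::
  "real \<Rightarrow> real \<Rightarrow> real \<Rightarrow> real \<Rightarrow> real \<Rightarrow> nat \<Rightarrow> nat \<Rightarrow> (nat \<Rightarrow> real) \<Rightarrow> (nat \<Rightarrow> real) \<Rightarrow> bool" where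
  "fwd_NE al be C c k M N f x \<longleftrightarrow>
     (\<forall>i<M. 0 \<le> x i) \<and>
     (\<forall>j<N. \<forall>f'. fwd_payoff al be c k M N (f(j := f')) x j \<le> fwd_payoff al be c k M N f x j) \<and>
     (\<forall>i<M. \<forall>x'. 0 \<le> x' \<longrightarrow>
        leader_payoff al be C c k M N f (x(i := x')) i \<le> leader_payoff al be C c k M N f x i)"

definition Qset :: "real \<Rightarrow> real \<Rightarrow> real \<Rightarrow> real \<Rightarrow> real \<Rightarrow> nat \<Rightarrow> nat \<Rightarrow> (real \<times> real) set" where
  "Qset al be C c k M N = {(f, x). 0 \<le> x \<and> fwd_NE al be C c k M N (\<lambda>_. f) (\<lambda>_. x)}"

definition X0 :: "real \<Rightarrow> real \<Rightarrow> real \<Rightarrow> real \<Rightarrow> real \<Rightarrow> nat \<Rightarrow> nat \<Rightarrow> real set" where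
  "X0 al be C c k M N = {x. 0 \<le> x \<and> (\<forall>i<M. \<forall>xb. 0 \<le> xb \<longrightarrow>
      leader_payoff al be C c k M N (\<lambda>_. 0) ((\<lambda>_. x)(i := xb)) i
        \<le> leader_payoff al be C c k M N (\<lambda>_. 0) (\<lambda>_. x) i)}"

definition SW :: "real \<Rightarrow> real \<Rightarrow> real \<Rightarrow> real \<Rightarrow> nat \<Rightarrow> nat \<Rightarrow> real \<Rightarrow> real \<Rightarrow> real" where
  "SW al be C c M N y x =
     integral {0 .. real M * x + real N * y} (\<lambda>w. invP al be w) - (real M * C * x + real N * c * y)"

end

theory Submission
  imports Defs
begin

text \<open>With equal marginal costs everything is linear in the shifted intercept
  \<open>A = (\<alpha> - C) / \<beta>\<close>. In the forward market the followers sell their whole capacity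
  forward, which commits them to produce \<open>k\<close>, and the leaders play Cournot on the residual
  demand: total output \<open>(M A + N k) / (M + 1)\<close>. Without forward positions the leaders are
  Stackelberg leaders facing Cournot followers: total output \<open>A (M N + M + N) / ((M + 1) (N + 1))\<close>.
  This is an equilibrium as long as no leader profits from flooding the market until the
  followers are pushed to capacity, which is exactly the upper bound on \<open>A\<close>. Both ratios are
  rational in \<open>A\<close>, and their differences from the stated bounds have the sign of \<open>A\<close> minus
  its upper bound; hence the bounds hold on the interval and are attained at its right end.\<close>

lemma sum_fun_upd:
  fixes y :: "nat \<Rightarrow> 'a::ab_group_add"
  assumes "j < N"
  shows "sum (y(j := z)) {..<N} = sum y {..<N} + (z - y j)"
proof -
  have "sum (y(j := z)) {..<N} = z + sum (y(j := z)) ({..<N} - {j})"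
    using assms by (subst sum.remove[of _ j]) auto
  also have "sum (y(j := z)) ({..<N} - {j}) = sum y ({..<N} - {j})"
    by (rule sum.cong) auto
  also have "\<dots> = sum y {..<N} - y j"
    using assms by (subst (2) sum.remove[of _ j]) auto
  finally show ?thesis by (simp add: algebra_simps)
qed

lemma total_fun_upd: "j < N \<Longrightarrow> total M N x (y(j := z)) = total M N x y + (z - y j)"
  unfolding total_def using sum_fun_upd by simp

definition spot_margin ::
  "real \<Rightarrow> real \<Rightarrow> real \<Rightarrow> nat \<Rightarrow> nat \<Rightarrow> (nat \<Rightarrow> real) \<Rightarrow> (nat \<Rightarrow> real) \<Rightarrow> (nat \<Rightarrow> real) \<Rightarrow> nat \<Rightarrow> real"
  where "spot_margin al be c M N f x y j = al - c - be * total M N x y - be * (y j - f j)"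

lemma spot_payoff_fun_upd:
  assumes "j < N"
  shows "spot_payoff al be c M N f x (y(j := z)) j - spot_payoff al be c M N f x y j
     = (z - y j) * spot_margin al be c M N f x y j - be * (z - y j)\<^sup>2"
  unfolding spot_payoff_def spot_margin_def invP_def total_fun_upd[OF assms]
  by (simp add: algebra_simps power2_eq_square)

lemma box_complementarity_variational_ineq:
  fixes g y z k :: real
  assumes "0 \<le> y" "y \<le> k" "0 < y \<longrightarrow> 0 \<le> g" "y < k \<longrightarrow> g \<le> 0" "0 \<le> z" "z \<le> k"
  shows "(z - y) * g \<le> 0"
  using assms by (cases "z < y"; cases "y < z") (auto intro: mult_nonpos_nonneg mult_nonneg_nonpos)

lemma concave_quadratic_max_on_interval_iff:
  fixes b g y k :: real
  assumes "b > 0" "0 \<le> y" "y \<le> k"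
  shows "(\<forall>z. 0 \<le> z \<and> z \<le> k \<longrightarrow> (z - y) * g - b * (z - y)\<^sup>2 \<le> 0)
     \<longleftrightarrow> (0 < y \<longrightarrow> 0 \<le> g) \<and> (y < k \<longrightarrow> g \<le> 0)"
proof
  assume opt: "\<forall>z. 0 \<le> z \<and> z \<le> k \<longrightarrow> (z - y) * g - b * (z - y)\<^sup>2 \<le> 0"
  have no_ascent: "\<not> (0 \<le> y + d \<and> y + d \<le> k)" if "0 < d * g" "b * \<bar>d\<bar> < \<bar>g\<bar>" for d
  proof
    assume "0 \<le> y + d \<and> y + d \<le> k"
    then have "d * g - b * d\<^sup>2 \<le> 0" using opt by fastforce
    moreover have "d \<noteq> 0" using that(1) by auto
    then have "b * d\<^sup>2 < \<bar>d\<bar> * \<bar>g\<bar>"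
      using mult_strict_left_mono[OF that(2), of "\<bar>d\<bar>"]
      by (simp add: power2_eq_square abs_mult_self_eq algebra_simps)
    moreover have "\<bar>d\<bar> * \<bar>g\<bar> = d * g" using that(1) by (simp add: abs_mult[symmetric])
    ultimately show False by linarith
  qed
  have "0 \<le> g" if "0 < y"
  proof (rule ccontr)
    assume g: "\<not> 0 \<le> g"
    define d where "d = min y (- g / (2 * b))"
    have "0 < d" "d \<le> y" "b * d \<le> - g / 2"
      using g \<open>0 < y\<close> \<open>b > 0\<close> by (auto simp: d_def field_simps min_def)
    then show False
      using no_ascent[of "- d"] g \<open>y \<le> k\<close> mult_pos_neg[of d g] by auto
  qed
  moreover have "g \<le> 0" if "y < k"
  proof (rule ccontr)
    assume g: "\<not> g \<le> 0"
    define d where "d = min (k - y) (g / (2 * b))"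
    have "0 < d" "d \<le> k - y" "b * d \<le> g / 2"
      using g \<open>y < k\<close> \<open>b > 0\<close> by (auto simp: d_def field_simps min_def)
    then show False
      using no_ascent[of d] g \<open>0 \<le> y\<close> by auto
  qed
  ultimately show "(0 < y \<longrightarrow> 0 \<le> g) \<and> (y < k \<longrightarrow> g \<le> 0)" by blast
next
  assume kkt: "(0 < y \<longrightarrow> 0 \<le> g) \<and> (y < k \<longrightarrow> g \<le> 0)"
  show "\<forall>z. 0 \<le> z \<and> z \<le> k \<longrightarrow> (z - y) * g - b * (z - y)\<^sup>2 \<le> 0"
  proof (intro allI impI)
    fix z assume "0 \<le> z \<and> z \<le> k"
    then have "(z - y) * g \<le> 0"
      using kkt assms box_complementarity_variational_ineq by blast
    then show "(z - y) * g - b * (z - y)\<^sup>2 \<le> 0"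
      using assms(1) zero_le_power2[of "z - y"] by (smt (verit) mult_nonneg_nonneg)
  qed
qed

definition spot_KKT ::
  "real \<Rightarrow> real \<Rightarrow> real \<Rightarrow> real \<Rightarrow> nat \<Rightarrow> nat \<Rightarrow> (nat \<Rightarrow> real) \<Rightarrow> (nat \<Rightarrow> real) \<Rightarrow> (nat \<Rightarrow> real) \<Rightarrow> bool"
  where "spot_KKT al be c k M N f x y \<longleftrightarrow> (\<forall>j. N \<le> j \<longrightarrow> y j = 0) \<and>
     (\<forall>j<N. 0 \<le> y j \<and> y j \<le> k \<and>
        (0 < y j \<longrightarrow> 0 \<le> spot_margin al be c M N f x y j) \<and>
        (y j < k \<longrightarrow> spot_margin al be c M N f x y j \<le> 0))"

lemma spot_NE_iff_KKT:
  assumes "be > 0"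
  shows "spot_NE al be c k M N f x y \<longleftrightarrow> spot_KKT al be c k M N f x y"
proof -
  have "(\<forall>z. 0 \<le> z \<and> z \<le> k \<longrightarrow>
            spot_payoff al be c M N f x (y(j := z)) j \<le> spot_payoff al be c M N f x y j)
     \<longleftrightarrow> (0 < y j \<longrightarrow> 0 \<le> spot_margin al be c M N f x y j) \<and>
         (y j < k \<longrightarrow> spot_margin al be c M N f x y j \<le> 0)"
    if "j < N" "0 \<le> y j" "y j \<le> k" for j
  proof -
    have "spot_payoff al be c M N f x (y(j := z)) j \<le> spot_payoff al be c M N f x y j
      \<longleftrightarrow> (z - y j) * spot_margin al be c M N f x y j - be * (z - y j)\<^sup>2 \<le> 0" for z
      using spot_payoff_fun_upd[OF that(1)] by (smt (verit))
    then show ?thesis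
      using concave_quadratic_max_on_interval_iff[OF assms that(2,3)] by presburger
  qed
  then show ?thesis
    unfolding spot_NE_def spot_KKT_def by blast
qed

text \<open>Summing the two variational inequalities over the followers gives
  \<open>D\<^sup>2 + \<Sum>d\<^sub>j\<^sup>2 \<le> 0\<close> for the differences \<open>d\<^sub>j\<close> of the two profiles and their total \<open>D\<close>.\<close>
lemma spot_KKT_unique:
  assumes be: "be > 0"
    and KKT: "spot_KKT al be c k M N f x y" "spot_KKT al be c k M N f x y'"
  shows "y = y'"
proof -
  define d where "d j = y' j - y j" for j
  define D where "D = sum d {..<N}"
  have margin_diff: "spot_margin al be c M N f x y j - spot_margin al be c M N f x y' j = be * (D + d j)"
    for j
    unfolding spot_margin_def total_def D_def d_def by (simp add: sum_subtractf algebra_simps)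
  have "(D + d j) * d j \<le> 0" if j: "j < N" for j
  proof -
    have "(y' j - y j) * spot_margin al be c M N f x y j \<le> 0"
      and "(y j - y' j) * spot_margin al be c M N f x y' j \<le> 0"
      using KKT j box_complementarity_variational_ineq unfolding spot_KKT_def by blast+
    then have "d j * (spot_margin al be c M N f x y j - spot_margin al be c M N f x y' j) \<le> 0"
      unfolding d_def right_diff_distrib left_diff_distrib by linarith
    then have "be * ((D + d j) * d j) \<le> 0"
      unfolding margin_diff by (simp add: algebra_simps)
    then show ?thesis using be by (simp add: mult_le_0_iff)
  qed
  then have "(\<Sum>j<N. (D + d j) * d j) \<le> 0" by (intro sum_nonpos) auto
  moreover have "(\<Sum>j<N. (D + d j) * d j) = D\<^sup>2 + (\<Sum>j<N. (d j)\<^sup>2)"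
    by (simp add: distrib_right sum.distrib sum_distrib_left D_def power2_eq_square)
  ultimately have "(\<Sum>j<N. (d j)\<^sup>2) = 0"
    by (smt (verit) sum_nonneg zero_le_power2)
  then have "y j = y' j" if "j < N" for j
    using that by (simp add: sum_nonneg_eq_0_iff d_def)
  moreover have "y j = y' j" if "N \<le> j" for j
    using KKT that unfolding spot_KKT_def by simp
  ultimately show ?thesis by (meson ext not_le)
qed

lemma spot_y_eqI:
  assumes "be > 0" "spot_KKT al be c k M N f x y"
  shows "spot_y al be c k M N f x = y"
  unfolding spot_y_def
  using assms spot_NE_iff_KKT spot_KKT_unique by (blast intro: the_equality)

definition uniform_profile :: "nat \<Rightarrow> real \<Rightarrow> nat \<Rightarrow> real"
  where "uniform_profile N w j = (if j < N then w else 0)"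

definition clip :: "real \<Rightarrow> real \<Rightarrow> real"
  where "clip k m = max 0 (min k m)"

lemma clip_KKT:
  assumes "0 \<le> k"
  shows "0 \<le> clip k m" "clip k m \<le> k" "0 < clip k m \<longrightarrow> clip k m \<le> m" "clip k m < k \<longrightarrow> m \<le> clip k m"
  using assms unfolding clip_def by auto

lemma clip_eq_self: "0 \<le> m \<Longrightarrow> m \<le> k \<Longrightarrow> clip k m = m"
  and clip_eq_upper: "0 \<le> k \<Longrightarrow> k \<le> m \<Longrightarrow> clip k m = k"
  unfolding clip_def by auto

lemma sum_uniform_profile: "sum (uniform_profile N w) {..<N} = real N * w"
  unfolding uniform_profile_def by simp

lemma spot_y_uniform_forward:
  assumes be: "be > 0" and k: "0 \<le> k" and A: "al - c = be * A"
  shows "spot_y al be c k M N (\<lambda>_. F) x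
    = uniform_profile N (clip k ((A - sum x {..<M} + F) / (real N + 1)))"
proof (rule spot_y_eqI[OF be])
  define m where "m = (A - sum x {..<M} + F) / (real N + 1)"
  define w where "w = clip k m"
  have margin: "spot_margin al be c M N (\<lambda>_. F) x (uniform_profile N w) j = be * (real N + 1) * (m - w)"
    if "j < N" for j
    using that A unfolding spot_margin_def total_def sum_uniform_profile m_def
    by (simp add: uniform_profile_def field_simps)
  have "0 < be * (real N + 1)" using be by simp
  then show "spot_KKT al be c k M N (\<lambda>_. F) x (uniform_profile N w)"
    unfolding spot_KKT_def using clip_KKT[OF k, of m] margin
    by (auto simp: uniform_profile_def w_def intro: mult_nonneg_nonneg mult_nonneg_nonpos)
qed

text \<open>If the non-deviating followers still want to produce at capacity, only the deviator's
  output reacts to a unilateral change of forward position.\<close>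
lemma spot_y_single_forward_deviation:
  assumes be: "be > 0" and k: "0 \<le> k" and A: "al - c = be * A" and j0: "j0 < N"
    and capacity: "(real N + 1) * k \<le> A - sum x {..<M} + F"
  shows "spot_y al be c k M N ((\<lambda>_. F)(j0 := f')) x
    = (uniform_profile N k)(j0 := clip k ((A - sum x {..<M} - (real N - 1) * k + f') / 2))"
proof (rule spot_y_eqI[OF be])
  define m where "m = (A - sum x {..<M} - (real N - 1) * k + f') / 2"
  define v where "v = clip k m"
  define y where "y = (uniform_profile N k)(j0 := v)"
  have tot: "total M N x y = sum x {..<M} + real N * k + (v - k)"
    unfolding y_def total_fun_upd[OF j0] using j0
    by (simp add: total_def sum_uniform_profile uniform_profile_def)
  have "spot_margin al be c M N ((\<lambda>_. F)(j0 := f')) x y j0 = 2 * be * (m - v)"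
    unfolding spot_margin_def tot using A by (simp add: y_def m_def algebra_simps)
  moreover have "spot_margin al be c M N ((\<lambda>_. F)(j0 := f')) x y j
      = be * ((A - sum x {..<M} + F - (real N + 1) * k) + (k - v))" if "j < N" "j \<noteq> j0" for j
    unfolding spot_margin_def tot using A that by (simp add: y_def uniform_profile_def algebra_simps)
  moreover have "0 \<le> (A - sum x {..<M} + F - (real N + 1) * k) + (k - v)"
    using capacity clip_KKT[OF k, of m] by (simp add: v_def)
  ultimately show "spot_KKT al be c k M N ((\<lambda>_. F)(j0 := f')) x y"
    unfolding spot_KKT_def using clip_KKT[OF k, of m] be j0 k
    by (auto simp: y_def v_def uniform_profile_def intro: mult_nonneg_nonneg mult_nonneg_nonpos)
qed

lemma leader_payoff_eq:
  "al - C = be * A \<Longrightarrow>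
    leader_payoff al be C c k M N f x i = be * (A - total M N x (spot_y al be c k M N f x)) * x i"
  unfolding leader_payoff_def invP_def Let_def by (simp add: algebra_simps)

lemma fwd_payoff_eq:
  "al - c = be * A \<Longrightarrow>
    fwd_payoff al be c k M N f x j = be * (A - total M N x (spot_y al be c k M N f x)) * spot_y al be c k M N f x j"
  unfolding fwd_payoff_def invP_def Let_def by (simp add: algebra_simps)

lemma total_uniform_profile: "total M N x (uniform_profile N w) = sum x {..<M} + real N * w"
  unfolding total_def sum_uniform_profile ..

lemma sum_const_fun_upd: "i < M \<Longrightarrow> sum ((\<lambda>_. a)(i := b)) {..<M} = real M * a + (b - a)"
  using sum_fun_upd[of i M "\<lambda>_. a" b] by simp

lemma forward_follower_deviation_le:
  fixes v k xq :: real
  assumes "0 \<le> v" "v \<le> k" "k \<le> xq"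
  shows "(xq + k - v) * v \<le> xq * k"
proof -
  have "0 \<le> (k - v) * (xq - v)" using assms by (intro mult_nonneg_nonneg) auto
  then show ?thesis by (simp add: algebra_simps)
qed

lemma forward_leader_deviation_le:
  fixes n k x' xq :: real
  assumes "0 \<le> n" "0 \<le> k" "0 \<le> x'"
  shows "(2 * xq + n * k - x' - n * clip k ((2 * xq + n * k - x' + k) / (n + 1))) * x' \<le> xq\<^sup>2"
proof -
  define m where "m = (2 * xq + n * k - x' + k) / (n + 1)"
  define w where "w = clip k m"
  have m: "(n + 1) * m = 2 * xq + n * k - x' + k" unfolding m_def using assms(1) by simp
  have "(2 * xq + n * k - x' - n * w) * x' \<le> xq\<^sup>2"
  proof (cases "w < k")
    case True
    then have "(n + 1) * m \<le> (n + 1) * w"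
      using clip_KKT[OF assms(2), of m] assms(1) by (simp add: w_def mult_left_mono)
    then have "2 * xq + n * k - x' - n * w \<le> 0" using m True by (simp add: algebra_simps)
    then have "(2 * xq + n * k - x' - n * w) * x' \<le> 0" using assms(3) by (rule mult_nonpos_nonneg)
    then show ?thesis using zero_le_power2[of xq] by linarith
  next
    case False
    then have "w = k" using clip_KKT[OF assms(2), of m] by (simp add: w_def)
    then show ?thesis using zero_le_power2[of "x' - xq"] by (simp add: power2_eq_square algebra_simps)
  qed
  then show ?thesis unfolding w_def m_def .
qed

text \<open>Against followers who react along the clipped best response, the leader's best output is
  \<open>s\<close> as long as the capacity branch does not pay more; with \<open>B = 2 s - n k\<close> that branch is worth
  at most \<open>B\<^sup>2 / 4\<close>, and the bound on \<open>s\<close> is exactly \<open>(n + 1) B\<^sup>2 \<le> 4 s\<^sup>2\<close>.\<close>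
lemma stackelberg_leader_deviation_le:
  fixes n k x' s :: real
  assumes n: "0 \<le> n" and k: "0 \<le> k" and x': "0 \<le> x'" and s: "0 \<le> s"
    and bound: "2 * (sqrt (n + 1) - 1) * s \<le> sqrt (n + 1) * n * k"
  shows "(n + 1) * ((2 * s - x' - n * clip k ((2 * s - x') / (n + 1))) * x') \<le> s\<^sup>2"
proof -
  define m where "m = (2 * s - x') / (n + 1)"
  have m: "(n + 1) * m = 2 * s - x'" unfolding m_def using n by simp
  consider "m < 0" | "0 \<le> m" "m \<le> k" | "k < m" by linarith
  then show ?thesis
  proof cases
    case 1
    then have "2 * s - x' \<le> 0" using m n by (metis mult_nonneg_nonpos less_imp_le add_nonneg_nonneg zero_le_one)
    then have "(2 * s - x' - n * clip k m) * x' \<le> 0"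
      using 1 x' k by (simp add: clip_def mult_nonpos_nonneg)
    then have "(n + 1) * ((2 * s - x' - n * clip k m) * x') \<le> 0"
      using n by (simp add: mult_nonneg_nonpos)
    then show ?thesis unfolding m_def using zero_le_power2[of s] by linarith
  next
    case 2
    then have "2 * s - x' - n * clip k m = m" using m by (simp add: clip_eq_self algebra_simps)
    then have "(n + 1) * ((2 * s - x' - n * clip k m) * x') = (2 * s - x') * x'"
      using m by (metis mult.assoc)
    also have "\<dots> \<le> s\<^sup>2" using zero_le_power2[of "x' - s"] by (simp add: power2_eq_square algebra_simps)
    finally show ?thesis unfolding m_def .
  next
    case 3
    define B where "B = 2 * s - n * k"
    have w: "2 * s - x' - n * clip k m = B - x'" using 3 k by (simp add: clip_eq_upper B_def)
    show ?thesis
    proof (cases "B \<le> 0")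
      case True
      then have "(B - x') * x' \<le> 0" using x' by (simp add: mult_nonpos_nonneg)
      then have "(n + 1) * ((B - x') * x') \<le> 0" using n by (simp add: mult_nonneg_nonpos)
      then show ?thesis unfolding m_def[symmetric] w using zero_le_power2[of s] by linarith
    next
      case False
      define t where "t = sqrt (n + 1)"
      have t: "1 \<le> t" "t\<^sup>2 = n + 1" using n by (auto simp: t_def)
      have "t * B \<le> 2 * s" using bound unfolding B_def t_def[symmetric] by (simp add: algebra_simps)
      then have "(t * B)\<^sup>2 \<le> (2 * s)\<^sup>2" using False t(1) by (intro power_mono) auto
      then have "(n + 1) * B\<^sup>2 \<le> 4 * s\<^sup>2" using t(2) by (simp add: power_mult_distrib)
      moreover have "(B - x') * x' \<le> B\<^sup>2 / 4"
        using zero_le_power2[of "B - 2 * x'"] by (simp add: power2_eq_square algebra_simps)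
      ultimately have "(n + 1) * ((B - x') * x') \<le> (n + 1) * (B\<^sup>2 / 4)"
        using n by (intro mult_left_mono) auto
      also have "\<dots> \<le> s\<^sup>2" using \<open>(n + 1) * B\<^sup>2 \<le> 4 * s\<^sup>2\<close> by simp
      finally show ?thesis unfolding m_def[symmetric] w .
    qed
  qed
qed

lemma forward_equilibrium:
  assumes be: "be > 0" and k: "0 \<le> k" and A: "al - C = be * A"
    and lo: "(real M + real N + 1) * k \<le> A"
  defines "xq \<equiv> (A - real N * k) / (real M + 1)"
  shows "(k, xq) \<in> Qset al be C C k M N"
    and "spot_y al be C k M N (\<lambda>_. k) (\<lambda>_. xq) = uniform_profile N k"
proof -
  have xq: "A - real M * xq - real N * k = xq" unfolding xq_def by (simp add: field_simps)
  have "(real M + 1) * k \<le> (real M + 1) * xq" using lo xq by (simp add: algebra_simps)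
  then have xqk: "k \<le> xq" by simp
  have cap: "(real N + 1) * k \<le> A - sum (\<lambda>_. xq) {..<M} + k" using xq xqk k by (simp add: algebra_simps)
  have "k \<le> (A - sum (\<lambda>_. xq) {..<M} + k) / (real N + 1)" using cap by (simp add: field_simps)
  then show base: "spot_y al be C k M N (\<lambda>_. k) (\<lambda>_. xq) = uniform_profile N k"
    by (simp add: spot_y_uniform_forward[OF be k A] clip_eq_upper[OF k])
  have follower: "fwd_payoff al be C k M N ((\<lambda>_. k)(j := f')) (\<lambda>_. xq) j
      \<le> fwd_payoff al be C k M N (\<lambda>_. k) (\<lambda>_. xq) j" if j: "j < N" for j f'
  proof -
    define v where "v = clip k ((A - sum (\<lambda>_. xq) {..<M} - (real N - 1) * k + f') / 2)"
    have dev: "spot_y al be C k M N ((\<lambda>_. k)(j := f')) (\<lambda>_. xq) = (uniform_profile N k)(j := v)"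
      unfolding v_def by (rule spot_y_single_forward_deviation[OF be k A j cap])
    have "0 \<le> v" "v \<le> k" using clip_KKT[OF k] by (auto simp: v_def)
    then have "be * ((xq + k - v) * v) \<le> be * (xq * k)"
      using forward_follower_deviation_le xqk be by (intro mult_left_mono) auto
    then show ?thesis
      using j xq unfolding fwd_payoff_eq[OF A] dev base total_fun_upd[OF j] total_uniform_profile
      by (simp add: uniform_profile_def algebra_simps)
  qed
  have leader: "leader_payoff al be C C k M N (\<lambda>_. k) ((\<lambda>_. xq)(i := x')) i
      \<le> leader_payoff al be C C k M N (\<lambda>_. k) (\<lambda>_. xq) i" if i: "i < M" and x': "0 \<le> x'" for i x'
  proof -
    have X: "A - sum ((\<lambda>_. xq)(i := x')) {..<M} = 2 * xq + real N * k - x'"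
      unfolding sum_const_fun_upd[OF i] using xq by (simp add: algebra_simps)
    define w where "w = clip k ((2 * xq + real N * k - x' + k) / (real N + 1))"
    have dev: "spot_y al be C k M N (\<lambda>_. k) ((\<lambda>_. xq)(i := x')) = uniform_profile N w"
      unfolding spot_y_uniform_forward[OF be k A] w_def X ..
    have "be * ((2 * xq + real N * k - x' - real N * w) * x') \<le> be * xq\<^sup>2"
      using forward_leader_deviation_le[of "real N" k x' xq] k x' be
      unfolding w_def by (intro mult_left_mono) auto
    moreover have "A - total M N ((\<lambda>_. xq)(i := x')) (uniform_profile N w)
        = 2 * xq + real N * k - x' - real N * w"
      using X unfolding total_uniform_profile by linarith
    moreover have "A - total M N (\<lambda>_. xq) (uniform_profile N k) = xq"
      using xq unfolding total_uniform_profile by simp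
    ultimately show ?thesis
      unfolding leader_payoff_eq[OF A] base dev by (simp add: power2_eq_square mult.assoc)
  qed
  show "(k, xq) \<in> Qset al be C C k M N"
    unfolding Qset_def fwd_NE_def using follower leader k xqk by auto
qed

lemma stackelberg_follower_output_le_capacity:
  fixes n k s :: real
  assumes n: "0 < n" and k: "0 \<le> k"
    and bound: "2 * (sqrt (n + 1) - 1) * s \<le> sqrt (n + 1) * n * k"
  shows "s / (n + 1) \<le> k"
proof -
  define t where "t = sqrt (n + 1)"
  have t: "1 < t" "t\<^sup>2 = n + 1" using n by (auto simp: t_def)
  have "(t - 1) * (2 * s) \<le> (t - 1) * (t * (t + 1) * k)"
    using bound t(2) unfolding t_def[symmetric] by (simp add: power2_eq_square algebra_simps)
  then have "2 * s \<le> t * (t + 1) * k" using t(1) by simp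
  also have "\<dots> \<le> 2 * t\<^sup>2 * k" using t(1) k by (simp add: power2_eq_square mult_right_mono)
  finally show ?thesis using t(2) n by (simp add: field_simps)
qed

lemma stackelberg_equilibrium:
  assumes be: "be > 0" and k: "0 \<le> k" and N: "0 < N" and A: "al - C = be * A" and A0: "0 \<le> A"
    and up: "A \<le> (real M + 1) * sqrt (real N + 1) / (2 * (sqrt (real N + 1) - 1)) * real N * k"
  defines "xS \<equiv> A / (real M + 1)"
  shows "xS \<in> X0 al be C C k M N"
    and "spot_y al be C k M N (\<lambda>_. 0) (\<lambda>_. xS) = uniform_profile N (xS / (real N + 1))"
proof -
  define t where "t = sqrt (real N + 1)"
  have t: "1 < t" using N by (auto simp: t_def)
  have xS: "A - real M * xS = xS" unfolding xS_def by (simp add: field_simps)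
  have xS0: "0 \<le> xS" unfolding xS_def using A0 by simp
  have "(real M + 1) * (2 * (t - 1) * xS) \<le> (real M + 1) * (t * real N * k)"
    using up xS t(1) unfolding t_def[symmetric] by (simp add: field_simps)
  then have bound: "2 * (t - 1) * xS \<le> t * real N * k" by simp
  then have "xS / (real N + 1) \<le> k"
    using stackelberg_follower_output_le_capacity[of "real N" k xS] N k unfolding t_def by simp
  then show base: "spot_y al be C k M N (\<lambda>_. 0) (\<lambda>_. xS) = uniform_profile N (xS / (real N + 1))"
    using xS xS0 by (simp add: spot_y_uniform_forward[OF be k A] clip_eq_self)
  have leader: "leader_payoff al be C C k M N (\<lambda>_. 0) ((\<lambda>_. xS)(i := xb)) i
      \<le> leader_payoff al be C C k M N (\<lambda>_. 0) (\<lambda>_. xS) i" if i: "i < M" and xb: "0 \<le> xb" for i xb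
  proof -
    have X: "A - sum ((\<lambda>_. xS)(i := xb)) {..<M} = 2 * xS - xb"
      unfolding sum_const_fun_upd[OF i] using xS by (simp add: algebra_simps)
    define w where "w = clip k ((2 * xS - xb) / (real N + 1))"
    have dev: "spot_y al be C k M N (\<lambda>_. 0) ((\<lambda>_. xS)(i := xb)) = uniform_profile N w"
      unfolding spot_y_uniform_forward[OF be k A] w_def X by simp
    have "(real N + 1) * ((2 * xS - xb - real N * w) * xb) \<le> xS\<^sup>2"
      unfolding w_def using stackelberg_leader_deviation_le[of "real N" k xb xS] k xb xS0 bound
      unfolding t_def by simp
    then have "(2 * xS - xb - real N * w) * xb \<le> xS / (real N + 1) * xS"
      by (simp add: field_simps power2_eq_square)
    then have "be * ((2 * xS - xb - real N * w) * xb) \<le> be * (xS / (real N + 1) * xS)"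
      using be by (intro mult_left_mono) auto
    moreover have "A - total M N ((\<lambda>_. xS)(i := xb)) (uniform_profile N w) = 2 * xS - xb - real N * w"
      using X unfolding total_uniform_profile by linarith
    moreover have "A - total M N (\<lambda>_. xS) (uniform_profile N (xS / (real N + 1))) = xS / (real N + 1)"
      using xS unfolding total_uniform_profile by (simp add: field_simps)
    ultimately show ?thesis
      unfolding leader_payoff_eq[OF A] base dev by (simp add: mult.assoc)
  qed
  show "xS \<in> X0 al be C C k M N"
    unfolding X0_def using leader xS0 by auto
qed


lemma diff_eq_pos_mult_diff_iffs:
  fixes x y a b c :: real
  assumes "0 < c" "x - y = c * (a - b)"
  shows "x \<le> y \<longleftrightarrow> a \<le> b" and "x = y \<longleftrightarrow> a = b"
proof -
  have "x - y \<le> 0 \<longleftrightarrow> a - b \<le> 0" "x - y = 0 \<longleftrightarrow> a - b = 0"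
    unfolding assms(2) using assms(1) by (auto simp: mult_le_0_iff)
  then show "x \<le> y \<longleftrightarrow> a \<le> b" and "x = y \<longleftrightarrow> a = b" by auto
qed

lemma sqrt_succ_gt_one:
  fixes n :: real
  assumes "0 < n"
  shows "1 < sqrt (n + 1)" and "n = (sqrt (n + 1))\<^sup>2 - 1"
  using assms by auto

lemma stackelberg_forward_output_ratio:
  fixes m n A k :: real
  assumes m: "0 \<le> m" and n: "0 < n" and k: "0 < k" and A: "0 < A"
  defines "t \<equiv> sqrt (n + 1)" and "K \<equiv> m * n + m + n"
  defines "ratio \<equiv> (A * K / ((m + 1) * (n + 1))) / ((m * A + n * k) / (m + 1))"
    and "bound \<equiv> K * (m + 1) / (m * (m + 1) * (n + 1) + 2 * (n + 1 - t))"
    and "Aup \<equiv> (m + 1) * t / (2 * (t - 1)) * n * k"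
  shows "ratio \<le> bound \<longleftrightarrow> A \<le> Aup" and "ratio = bound \<longleftrightarrow> A = Aup"
proof -
  have t: "1 < t" and n_eq: "n = t\<^sup>2 - 1" using sqrt_succ_gt_one[OF n] unfolding t_def by auto
  define d where "d = m * (m + 1) * (n + 1) + 2 * (n + 1 - t)"
  have "n + 1 - t = t * (t - 1)" using n_eq by (simp add: power2_eq_square algebra_simps)
  moreover have "0 < t * (t - 1)" using t by simp
  ultimately have d: "0 < d" unfolding d_def using m n by (simp add: add_nonneg_pos)
  have q: "0 < m * A + n * k" using m n k A by (simp add: add_nonneg_pos)
  have K: "0 < K" unfolding K_def using m n by (simp add: add_nonneg_pos)
  have nz: "m + 1 \<noteq> 0" "n + 1 \<noteq> 0" "m * A + n * k \<noteq> 0" "d \<noteq> 0" using m n q d by auto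
  have ratio: "ratio = A * K / ((n + 1) * (m * A + n * k))"
    unfolding ratio_def using nz by (simp add: divide_simps)
  have "ratio - bound = K * (A * d - (m + 1) * (n + 1) * (m * A + n * k)) / ((n + 1) * (m * A + n * k) * d)"
    unfolding ratio bound_def d_def[symmetric] using nz by (simp add: divide_simps) (simp add: algebra_simps)
  also have "A * d - (m + 1) * (n + 1) * (m * A + n * k) = 2 * t * (t - 1) * (A - Aup)"
    using t unfolding d_def Aup_def n_eq by (simp add: field_simps power2_eq_square)
  finally have "ratio - bound = 2 * K * t * (t - 1) / ((n + 1) * (m * A + n * k) * d) * (A - Aup)"
    by simp
  moreover have "0 < 2 * K * t * (t - 1) / ((n + 1) * (m * A + n * k) * d)"
    using K t q d n by simp
  ultimately show "ratio \<le> bound \<longleftrightarrow> A \<le> Aup" and "ratio = bound \<longleftrightarrow> A = Aup"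
    using diff_eq_pos_mult_diff_iffs by blast+
qed

lemma stackelberg_forward_welfare_ratio:
  fixes m n A k :: real
  assumes m: "1 \<le> m" and n: "0 < n" and k: "0 < k" and A: "n * k < A"
  defines "t \<equiv> sqrt (n + 1)" and "K \<equiv> m * n + m + n"
  defines "s \<equiv> A * K / ((m + 1) * (n + 1))" and "q \<equiv> (m * A + n * k) / (m + 1)"
  defines "ratio \<equiv> (A * s - s\<^sup>2 / 2) / (A * q - q\<^sup>2 / 2)"
    and "bound \<equiv> (m + 1)\<^sup>2 * K * (K + 2) / ((n + 1) * ((m\<^sup>2 + m + 2) * t - 2) * ((m\<^sup>2 + 3 * m) * t + 2))"
    and "Aup \<equiv> (m + 1) * t / (2 * (t - 1)) * n * k"
  shows "ratio \<le> bound \<longleftrightarrow> A \<le> Aup" and "ratio = bound \<longleftrightarrow> A = Aup"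
proof -
  have t: "1 < t" and n_eq: "n = t\<^sup>2 - 1" using sqrt_succ_gt_one[OF n] unfolding t_def by auto
  define Q where "Q = (m * A + n * k) * ((m + 2) * A - n * k)"
  define P1 where "P1 = (m\<^sup>2 + m + 2) * t - 2"
  define P2 where "P2 = (m\<^sup>2 + 3 * m) * t + 2"
  have "0 < n * k" using n k by simp
  moreover have "0 \<le> (m + 1) * A" using m A \<open>0 < n * k\<close> by simp
  then have "n * k < (m + 2) * A" using A by (simp add: algebra_simps)
  ultimately have Q: "0 < Q" unfolding Q_def using m A by (intro mult_pos_pos) (auto intro: add_pos_pos)
  have "1 \<le> m\<^sup>2" using m by (simp add: one_le_power)
  then have "4 \<le> m\<^sup>2 + m + 2" using m by linarith
  then have "4 < (m\<^sup>2 + m + 2) * t" using t by (smt (verit) mult_less_cancel_left1)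
  then have P1: "0 < P1" unfolding P1_def by simp
  have P2: "0 < P2" unfolding P2_def using m t by (simp add: add_pos_pos)
  have K: "0 < K" unfolding K_def using m n by (simp add: add_pos_pos)
  have nz: "m + 1 \<noteq> 0" "n + 1 \<noteq> 0" "Q \<noteq> 0" "P1 \<noteq> 0" "P2 \<noteq> 0" using m n Q P1 P2 by auto
  have Wq: "A * q - q\<^sup>2 / 2 = Q / (2 * (m + 1)\<^sup>2)"
    unfolding q_def Q_def using nz by (simp add: divide_simps) (simp add: algebra_simps power2_eq_square)
  have Ws: "A * s - s\<^sup>2 / 2 = A\<^sup>2 * K * (K + 2) / (2 * (m + 1)\<^sup>2 * (n + 1)\<^sup>2)"
    unfolding s_def K_def using nz by (simp add: divide_simps) (simp add: algebra_simps power2_eq_square)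
  have "ratio - bound = K * (K + 2) * (A\<^sup>2 * (P1 * P2) - (m + 1)\<^sup>2 * (n + 1) * Q) / ((n + 1)\<^sup>2 * Q * P1 * P2)"
    unfolding ratio_def bound_def Wq Ws P1_def[symmetric] P2_def[symmetric] using nz
    by (simp add: divide_simps) (simp add: algebra_simps power2_eq_square)
  also have "A\<^sup>2 * (P1 * P2) - (m + 1)\<^sup>2 * (n + 1) * Q
      = 2 * (t - 1) * (2 * A * (m + 1) * t - (m + 1) * t * n * k - 2 * (t - 1) * A) * (A - Aup)"
  proof -
    have P12: "P1 * P2 = (m + 1)\<^sup>2 * m * (m + 2) * t\<^sup>2 + 4 * (m + 1) * t * (t - 1) - 4 * (t - 1)\<^sup>2"
      unfolding P1_def P2_def by (simp add: algebra_simps power2_eq_square)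
    have "A\<^sup>2 * (P1 * P2) - (m + 1)\<^sup>2 * t\<^sup>2 * Q
        = (2 * (t - 1) * A - (m + 1) * t * n * k) * (2 * A * (m + 1) * t - (m + 1) * t * n * k - 2 * (t - 1) * A)"
      unfolding P12 Q_def by (simp add: algebra_simps power2_eq_square)
    moreover have "2 * (t - 1) * A - (m + 1) * t * n * k = 2 * (t - 1) * (A - Aup)"
      unfolding Aup_def using t by (simp add: field_simps)
    ultimately show ?thesis using n_eq by simp
  qed
  finally have "ratio - bound = 2 * K * (K + 2) * (t - 1) * (2 * A * (m + 1) * t - (m + 1) * t * n * k - 2 * (t - 1) * A)
      / ((n + 1)\<^sup>2 * Q * P1 * P2) * (A - Aup)"
    by simp
  moreover have "0 < 2 * A * (m + 1) * t - (m + 1) * t * n * k - 2 * (t - 1) * A"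
  proof -
    have "2 * t * A \<le> (m + 1) * t * A" using m t A \<open>0 < n * k\<close> by (intro mult_right_mono) auto
    moreover have "(m + 1) * t * A < (m + 1) * t * (2 * A - n * k)"
      using m t A by (intro mult_strict_left_mono) auto
    moreover have "2 * A * (m + 1) * t - (m + 1) * t * n * k - 2 * (t - 1) * A
        = (m + 1) * t * (2 * A - n * k) - 2 * t * A + 2 * A"
      by (simp add: algebra_simps)
    ultimately show ?thesis using A \<open>0 < n * k\<close> by linarith
  qed
  then have "0 < 2 * K * (K + 2) * (t - 1) * (2 * A * (m + 1) * t - (m + 1) * t * n * k - 2 * (t - 1) * A)
      / ((n + 1)\<^sup>2 * Q * P1 * P2)"
    using K t Q P1 P2 n by simp
  ultimately show "ratio \<le> bound \<longleftrightarrow> A \<le> Aup" and "ratio = bound \<longleftrightarrow> A = Aup"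
    using diff_eq_pos_mult_diff_iffs by blast+
qed

lemma stackelberg_forward_output_order:
  fixes m n A k :: real
  assumes m: "0 \<le> m" and n: "0 < n" and k: "0 < k" and A: "(n + 1) * k < A"
  defines "s \<equiv> A * (m * n + m + n) / ((m + 1) * (n + 1))" and "q \<equiv> (m * A + n * k) / (m + 1)"
  shows "0 < q" and "q < s" and "s < A"
proof -
  have "0 < A" using A k n by (smt (verit) mult_pos_pos)
  then have "0 < m * A + n * k" using m n k by (simp add: add_nonneg_pos mult_nonneg_nonneg)
  then show "0 < q" unfolding q_def using m by simp
  have nz: "m + 1 \<noteq> 0" "n + 1 \<noteq> 0" using m n by auto
  have "s - q = n * (A - (n + 1) * k) / ((m + 1) * (n + 1))"
    unfolding s_def q_def using nz by (simp add: divide_simps) (simp add: algebra_simps)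
  moreover have "0 < n * (A - (n + 1) * k) / ((m + 1) * (n + 1))" using m n A by simp
  ultimately show "q < s" by simp
  have "A - s = A / ((m + 1) * (n + 1))"
    unfolding s_def using nz by (simp add: divide_simps) (simp add: algebra_simps)
  moreover have "0 < A / ((m + 1) * (n + 1))" using m n \<open>0 < A\<close> by simp
  ultimately show "s < A" by simp
qed

lemma quadratic_welfare_strict_mono:
  fixes A q s :: real
  assumes "0 \<le> q" "q < s" "s \<le> A"
  shows "A * q - q\<^sup>2 / 2 < A * s - s\<^sup>2 / 2"
proof -
  have "(A * s - s\<^sup>2 / 2) - (A * q - q\<^sup>2 / 2) = (s - q) * (2 * A - s - q) / 2"
    by (simp add: algebra_simps power2_eq_square)
  moreover have "0 < (s - q) * (2 * A - s - q)" using assms by (intro mult_pos_pos) auto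
  ultimately show ?thesis by simp
qed

lemma capacity_bound_le_upper:
  fixes m n k :: real
  assumes m: "1 \<le> m" and n: "0 < n" and k: "0 \<le> k"
  shows "(m + n + 1) * k \<le> (m + 1) * sqrt (n + 1) / (2 * (sqrt (n + 1) - 1)) * n * k"
proof -
  define t where "t = sqrt (n + 1)"
  have t: "1 < t" and n_eq: "n = t\<^sup>2 - 1" using sqrt_succ_gt_one[OF n] unfolding t_def by auto
  have upper: "(m + 1) * t / (2 * (t - 1)) * n = (m + 1) * t * (t + 1) / 2"
    using t unfolding n_eq by (simp add: field_simps power2_eq_square)
  have "1 * t \<le> m * t" using m t by (intro mult_right_mono) auto
  then have "t \<le> m * t + m * 2" using m by simp
  then have "0 \<le> (t - 1) * (m * (t + 2) - t)" using t by (intro mult_nonneg_nonneg) (auto simp: algebra_simps)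
  then have "m + n + 1 \<le> (m + 1) * t * (t + 1) / 2"
    unfolding n_eq by (simp add: algebra_simps power2_eq_square)
  then show ?thesis unfolding t_def[symmetric] upper using k by (rule mult_right_mono)
qed


lemma integral_invP:
  "0 \<le> T \<Longrightarrow> integral {0..T} (invP al be) = al * T - be * T\<^sup>2 / 2"
proof -
  assume "0 \<le> T"
  have "(invP al be has_integral (al * T - be * T\<^sup>2 / 2) - (al * 0 - be * 0\<^sup>2 / 2)) {0..T}"
  proof (rule fundamental_theorem_of_calculus[OF \<open>0 \<le> T\<close>])
    fix w :: real
    show "((\<lambda>w. al * w - be * w\<^sup>2 / 2) has_vector_derivative invP al be w) (at w within {0..T})"
      unfolding invP_def has_real_derivative_iff_has_vector_derivative[symmetric]
      by (auto intro!: derivative_eq_intros)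
  qed
  then show ?thesis by (simp add: integral_unique)
qed

lemma SW_eq:
  assumes "0 \<le> real M * x + real N * y" and "al - C = be * A"
  shows "SW al be C C M N y x = be * (A * (real M * x + real N * y) - (real M * x + real N * y)\<^sup>2 / 2)"
  unfolding SW_def integral_invP[OF assms(1)] using assms(2)
  by (simp add: algebra_simps power2_eq_square)

text \<open>Stated for an arbitrary property \<open>P\<close> of the two aggregate outputs and welfares, so that
  each part of the theorem is an instance.\<close>
lemma symmetric_equilibria_compare:
  fixes al be C k :: real and M N :: nat and P :: "real \<Rightarrow> real \<Rightarrow> real \<Rightarrow> real \<Rightarrow> bool"
  assumes be: "be > 0" and k: "0 < k" and M: "1 \<le> M" and N: "0 < N"
  defines "A \<equiv> (al - C) / be"
  defines "q \<equiv> (real M * A + real N * k) / (real M + 1)"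
    and "s \<equiv> A * (real M * real N + real M + real N) / ((real M + 1) * (real N + 1))"
  assumes lo: "(real M + real N + 1) * k \<le> A"
    and up: "A \<le> (real M + 1) * sqrt (real N + 1) / (2 * (sqrt (real N + 1) - 1)) * real N * k"
    and P: "P q s (be * (A * q - q\<^sup>2 / 2)) (be * (A * s - s\<^sup>2 / 2))"
  shows "\<exists>(f, x) \<in> Qset al be C C k M N. \<exists>xS \<in> X0 al be C C k M N. \<forall>j<N.
    (let y = spot_y al be C k M N (\<lambda>_. f) (\<lambda>_. x) j;
         yS = spot_y al be C k M N (\<lambda>_. 0) (\<lambda>_. xS) j in
      P (real M * x + real N * y) (real M * xS + real N * yS)
        (SW al be C C M N y x) (SW al be C C M N yS xS))"
proof -
  define xq where "xq = (A - real N * k) / (real M + 1)"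
  define xS where "xS = A / (real M + 1)"
  have A: "al - C = be * A" unfolding A_def using be by simp
  have "0 < real M * k" using k M by simp
  then have "(real N + 1) * k < A" using lo by (simp add: algebra_simps)
  moreover have "0 \<le> real M" "0 < real N" using N by simp_all
  ultimately have order: "0 < q" "q < s" "s < A"
    using stackelberg_forward_output_order[of "real M" "real N" k A] k unfolding q_def s_def by simp_all
  have "0 \<le> A" using order by linarith
  note forward = forward_equilibrium[OF be less_imp_le[OF k] A lo, folded xq_def]
  note stackelberg = stackelberg_equilibrium[OF be less_imp_le[OF k] N A \<open>0 \<le> A\<close> up, folded xS_def]
  have q: "real M * xq + real N * k = q" unfolding xq_def q_def by (simp add: field_simps)
  have s: "real M * xS + real N * (xS / (real N + 1)) = s"
    unfolding xS_def s_def by (simp add: divide_simps) (simp add: algebra_simps)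
  have SWq: "SW al be C C M N k xq = be * (A * q - q\<^sup>2 / 2)"
    using SW_eq[of M xq N k, OF _ A] order unfolding q by simp
  have SWs: "SW al be C C M N (xS / (real N + 1)) xS = be * (A * s - s\<^sup>2 / 2)"
    using SW_eq[of M xS N "xS / (real N + 1)", OF _ A] order unfolding s by simp
  have spot: "spot_y al be C k M N (\<lambda>_. k) (\<lambda>_. xq) j = k"
      "spot_y al be C k M N (\<lambda>_. 0) (\<lambda>_. xS) j = xS / (real N + 1)" if "j < N" for j
    using forward(2) stackelberg(2) that by (simp_all add: uniform_profile_def)
  show ?thesis
    by (rule bexI[OF _ forward(1)], unfold prod.case, rule bexI[OF _ stackelberg(1)], intro allI impI)
      (simp only: Let_def spot q s SWq SWs, rule P)
qed

lemma stackelberg_forward_comparison: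
  fixes m n k A :: real
  assumes m: "1 \<le> m" and n: "0 < n" and k: "0 < k" and lo: "(m + n + 1) * k \<le> A"
  defines "t \<equiv> sqrt (n + 1)" and "K \<equiv> m * n + m + n"
  defines "s \<equiv> A * K / ((m + 1) * (n + 1))" and "q \<equiv> (m * A + n * k) / (m + 1)"
  defines "b1 \<equiv> K * (m + 1) / (m * (m + 1) * (n + 1) + 2 * (n + 1 - t))"
    and "b2 \<equiv> (m + 1)\<^sup>2 * K * (K + 2) / ((n + 1) * ((m\<^sup>2 + m + 2) * t - 2) * ((m\<^sup>2 + 3 * m) * t + 2))"
    and "Aup \<equiv> (m + 1) * t / (2 * (t - 1)) * n * k"
  shows "q < s" and "A * q - q\<^sup>2 / 2 < A * s - s\<^sup>2 / 2"
    and "s / q \<le> b1 \<longleftrightarrow> A \<le> Aup" and "s / q = b1 \<longleftrightarrow> A = Aup"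
    and "(A * s - s\<^sup>2 / 2) / (A * q - q\<^sup>2 / 2) \<le> b2 \<longleftrightarrow> A \<le> Aup"
    and "(A * s - s\<^sup>2 / 2) / (A * q - q\<^sup>2 / 2) = b2 \<longleftrightarrow> A = Aup"
proof -
  have "0 < m * k" using m k by simp
  then have "(n + 1) * k < A" using lo by (simp add: algebra_simps)
  moreover have "0 < n * k" using n k by simp
  moreover have "(n + 1) * k = n * k + k" by (simp add: algebra_simps)
  ultimately have "n * k < A" "0 < A" using k by linarith+
  note order = stackelberg_forward_output_order[of m n k A, folded K_def, folded s_def q_def]
  show "q < s" and "A * q - q\<^sup>2 / 2 < A * s - s\<^sup>2 / 2"
    using order m n k \<open>(n + 1) * k < A\<close> by (auto intro: quadratic_welfare_strict_mono)
  show "s / q \<le> b1 \<longleftrightarrow> A \<le> Aup" and "s / q = b1 \<longleftrightarrow> A = Aup"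
    using stackelberg_forward_output_ratio[of m n k A] m n k \<open>0 < A\<close>
    unfolding s_def q_def b1_def Aup_def K_def t_def by auto
  show "(A * s - s\<^sup>2 / 2) / (A * q - q\<^sup>2 / 2) \<le> b2 \<longleftrightarrow> A \<le> Aup"
    and "(A * s - s\<^sup>2 / 2) / (A * q - q\<^sup>2 / 2) = b2 \<longleftrightarrow> A = Aup"
    using stackelberg_forward_welfare_ratio[of m n k A] m n k \<open>n * k < A\<close>
    unfolding s_def q_def b2_def Aup_def K_def t_def by auto
qed

theorem lemma10:
  fixes al be C c k :: real and M N :: nat
  assumes "M \<ge> 1" and "N \<ge> 2" and "al > 0" and "be > 0" and "c \<ge> C" and "C > 0" and "k > 0"
    and dC: "(c - C) / be = 0"
  shows
   "((real M + real N + 1) * k \<le> (al - C) / be \<and>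
     (al - C) / be \<le> (real M + 1) * sqrt (real N + 1) / (2 * (sqrt (real N + 1) - 1)) * real N * k
     \<longrightarrow>
     (\<exists>(f, x) \<in> Qset al be C c k M N. \<exists>xS \<in> X0 al be C c k M N.
        \<forall>j<N.
        (let y = spot_y al be c k M N (\<lambda>_. f) (\<lambda>_. x) j;
             yS = spot_y al be c k M N (\<lambda>_. 0) (\<lambda>_. xS) j in
          real M * x + real N * y < real M * xS + real N * yS \<and>
          SW al be C c M N y x < SW al be C c M N yS xS \<and>
          (real M * xS + real N * yS) / (real M * x + real N * y)
            \<le> (real M * real N + real M + real N) * (real M + 1) /
               (real M * (real M + 1) * (real N + 1) + 2 * (real N + 1 - sqrt (real N + 1))) \<and>
          SW al be C c M N yS xS / SW al be C c M N y x
            \<le> (real M + 1)^2 * (real M * real N + real M + real N) * (real M * real N + real M + real N + 2) /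
               ((real N + 1) * ((real M^2 + real M + 2) * sqrt (real N + 1) - 2) *
                ((real M^2 + 3 * real M) * sqrt (real N + 1) + 2)))))
   \<and>
   (\<exists>al'. al' > 0 \<and> (real M + real N + 1) * k \<le> (al' - C) / be \<and>
      (al' - C) / be \<le> (real M + 1) * sqrt (real N + 1) / (2 * (sqrt (real N + 1) - 1)) * real N * k \<and>
      (\<exists>(f, x) \<in> Qset al' be C c k M N. \<exists>xS \<in> X0 al' be C c k M N. \<forall>j<N.
        (let y = spot_y al' be c k M N (\<lambda>_. f) (\<lambda>_. x) j;
             yS = spot_y al' be c k M N (\<lambda>_. 0) (\<lambda>_. xS) j in
          (real M * xS + real N * yS) / (real M * x + real N * y)
            = (real M * real N + real M + real N) * (real M + 1) /
               (real M * (real M + 1) * (real N + 1) + 2 * (real N + 1 - sqrt (real N + 1))))))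
   \<and>
   (\<exists>al'. al' > 0 \<and> (real M + real N + 1) * k \<le> (al' - C) / be \<and>
      (al' - C) / be \<le> (real M + 1) * sqrt (real N + 1) / (2 * (sqrt (real N + 1) - 1)) * real N * k \<and>
      (\<exists>(f, x) \<in> Qset al' be C c k M N. \<exists>xS \<in> X0 al' be C c k M N. \<forall>j<N.
        (let y = spot_y al' be c k M N (\<lambda>_. f) (\<lambda>_. x) j;
             yS = spot_y al' be c k M N (\<lambda>_. 0) (\<lambda>_. xS) j in
          SW al' be C c M N yS xS / SW al' be C c M N y x
            = (real M + 1)^2 * (real M * real N + real M + real N) * (real M * real N + real M + real N + 2) /
               ((real N + 1) * ((real M^2 + real M + 2) * sqrt (real N + 1) - 2) *
                ((real M^2 + 3 * real M) * sqrt (real N + 1) + 2)))))"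
proof -
  have cC: "c = C" using dC \<open>be > 0\<close> by simp
  have M: "1 \<le> real M" and N: "0 < real N" using assms by auto
  define Aup where "Aup = (real M + 1) * sqrt (real N + 1) / (2 * (sqrt (real N + 1) - 1)) * real N * k"
  have lo_Aup: "(real M + real N + 1) * k \<le> Aup"
    unfolding Aup_def using capacity_bound_le_upper[OF M N] \<open>k > 0\<close> by simp
  then have al'_pos: "0 < C + be * Aup" using \<open>C > 0\<close> \<open>be > 0\<close> \<open>k > 0\<close>
    by (smt (verit) mult_nonneg_nonneg of_nat_0_le_iff)
  have al'_A: "(C + be * Aup - C) / be = Aup" using \<open>be > 0\<close> by simp
  note compare = stackelberg_forward_comparison[OF M N \<open>k > 0\<close>]
  show ?thesis
    unfolding cC
    apply (intro conjI impI)
    subgoal premises bounds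
      using bounds compare(1,2)[OF bounds[THEN conjunct1]]
        compare(3,5)[OF bounds[THEN conjunct1], THEN iffD2, OF bounds[THEN conjunct2]] assms
      by (intro symmetric_equilibria_compare) simp_all
    subgoal using compare(4)[OF lo_Aup] lo_Aup al'_pos al'_A assms
      by (intro exI[of _ "C + be * Aup"] conjI symmetric_equilibria_compare) (simp_all add: Aup_def)
    subgoal using compare(6)[OF lo_Aup] lo_Aup al'_pos al'_A assms
      by (intro exI[of _ "C + be * Aup"] conjI symmetric_equilibria_compare) (simp_all add: Aup_def)
    done
qed

end
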